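(* Let $n\ge 3$ and let $I_{B_n}\subset k[x_0,\dots,x_{n+1}]$ be the Stanley-Reisner ideal of the bipyramid complex $B_n$. Then $$I_{B_n}=\bigcap_{S\in\mathcal{T}_{n-2,Q_n}}\left(I_{[0,S]}\cap I_{[n+1,S]}\right),$$ and for every integer $m\ge 1$, $$I_{B_n}^{(m)}=\bigcap_{S\in\mathcal{T}_{n-2,Q_n}}\left(I_{[0,S]}^m\cap I_{[n+1,S]}^m\right).$$
   Context: Let $k$ be a field and $n\ge 3$. The $n$-gon $Q_n$ is the cycle graph on vertices $1,\dots,n$ with edges $\{i,i+1\}$ ($1\le i\le n-1$) and $\{n,1\}$. $B_n$ is the simplicial complex on $\{0,1,\dots,n+1\}$ whose facets are $\{0,i,j\}$ and $\{n+1,i,j\}$ for every edge $\{i,j\}$ of $Q_n$ (the boundary of the bipyramid over $Q_n$). Its Stanley-Reisner ideal $I_{B_n}$ is generated by the monomials $\prod_{i\in\tau}x_i$ for $\tau\subseteq\{0,\dots,n+1\}$ not a face of $B_n$. $\mathcal{T}_{n-2,Q_n}$ denotes the set of subtrees of $Q_n$ with $n-2$ vertices (i.e. sets of $n-2$ vertices of $Q_n$ inducing a tree). For $S\in\mathcal{T}_{n-2,Q_n}$ with vertex set $V(S)$, put $I_{[0,S]}=\langle x_0\rangle+\langle x_i: i\in V(S)\rangle$ and $I_{[n+1,S]}=\langle x_{n+1}\rangle+\langle x_i: i\in V(S)\rangle$. For a homogeneous ideal $I$ of $R=k[x_0,\dots,x_{n+1}]$, $I^{(m)}=R\cap\bigcap_{P\in\mathrm{Ass}(I)}I^mR_P$.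 *)

theory Defs
  imports Main "HOL-Library.Poly_Mapping"
begin

text \<open>Polynomials in variables indexed by nat with coefficients in 'k:
  a polynomial is a finitely supported map from monomials (exponent vectors) to coefficients.\<close>
type_synonym 'k mpoly = "(nat \<Rightarrow>\<^sub>0 nat) \<Rightarrow>\<^sub>0 'k"

definition Var :: "nat \<Rightarrow> 'k::comm_ring_1 mpoly" where
  "Var i = Poly_Mapping.single (Poly_Mapping.single i 1) 1"

text \<open>The ring R = k[x_0,...,x_{n+1}] as a subring (carrier) of the polynomial ring.\<close>
definition Rn :: "nat \<Rightarrow> 'k::comm_ring_1 mpoly set" where
  "Rn n = {p. \<forall>mon \<in> Poly_Mapping.keys p. Poly_Mapping.keys (mon :: nat \<Rightarrow>\<^sub>0 nat) \<subseteq> {0..n+1}}"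

definition is_ideal :: "'a::comm_ring_1 set \<Rightarrow> 'a set \<Rightarrow> bool" where
  "is_ideal R J \<longleftrightarrow> J \<subseteq> R \<and> 0 \<in> J \<and> (\<forall>a\<in>J. \<forall>b\<in>J. a + b \<in> J)
      \<and> (\<forall>r\<in>R. \<forall>a\<in>J. r * a \<in> J)"

definition gen_ideal :: "'a::comm_ring_1 set \<Rightarrow> 'a set \<Rightarrow> 'a set" where
  "gen_ideal R S = \<Inter>{J. is_ideal R J \<and> S \<subseteq> J}"

definition ideal_mult :: "'a::comm_ring_1 set \<Rightarrow> 'a set \<Rightarrow> 'a set \<Rightarrow> 'a set" where
  "ideal_mult R I J = gen_ideal R {a * b | a b. a \<in> I \<and> b \<in> J}"

fun ideal_pow :: "'a::comm_ring_1 set \<Rightarrow> 'a set \<Rightarrow> nat \<Rightarrow> 'a set" where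
  "ideal_pow R I 0 = R"
| "ideal_pow R I (Suc m) = ideal_mult R I (ideal_pow R I m)"

definition prime_ideal :: "'a::comm_ring_1 set \<Rightarrow> 'a set \<Rightarrow> bool" where
  "prime_ideal R P \<longleftrightarrow> is_ideal R P \<and> P \<noteq> R \<and>
      (\<forall>a\<in>R. \<forall>b\<in>R. a * b \<in> P \<longrightarrow> a \<in> P \<or> b \<in> P)"

definition Ass :: "'a::comm_ring_1 set \<Rightarrow> 'a set \<Rightarrow> 'a set set" where
  "Ass R I = {P. prime_ideal R P \<and> (\<exists>g\<in>R. P = {f \<in> R. f * g \<in> I})}"

text \<open>Symbolic power: I^(m) = R \<inter> \<Inter>_{P \<in> Ass I} I^m R_P. Since R is a domain,
  f \<in> I^m R_P iff s f \<in> I^m for some s \<in> R - P.\<close>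
definition symb_pow :: "'a::comm_ring_1 set \<Rightarrow> 'a set \<Rightarrow> nat \<Rightarrow> 'a set" where
  "symb_pow R I m = {f \<in> R. \<forall>P \<in> Ass R I. \<exists>s \<in> R - P. s * f \<in> ideal_pow R I m}"

definition qedge :: "nat \<Rightarrow> nat \<Rightarrow> nat \<Rightarrow> bool" where
  "qedge n i j \<longleftrightarrow> i \<in> {1..n} \<and> j \<in> {1..n} \<and>
     (j = i + 1 \<or> i = j + 1 \<or> (i = n \<and> j = 1) \<or> (i = 1 \<and> j = n))"

definition Bn_face :: "nat \<Rightarrow> nat set \<Rightarrow> bool" where
  "Bn_face n \<tau> \<longleftrightarrow> (\<exists>i j a. qedge n i j \<and> a \<in> {0, n+1} \<and> \<tau> \<subseteq> {a, i, j})"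

definition SR_ideal_Bn :: "nat \<Rightarrow> 'k::comm_ring_1 mpoly set" where
  "SR_ideal_Bn n = gen_ideal (Rn n)
     {\<Prod>i\<in>\<tau>. Var i | \<tau>. \<tau> \<subseteq> {0..n+1} \<and> \<not> Bn_face n \<tau>}"

definition induces_tree :: "nat \<Rightarrow> nat set \<Rightarrow> bool" where
  "induces_tree n V \<longleftrightarrow> V \<subseteq> {1..n} \<and> V \<noteq> {} \<and>
     (\<forall>u\<in>V. \<forall>v\<in>V. (\<lambda>a b. a \<in> V \<and> b \<in> V \<and> qedge n a b)\<^sup>*\<^sup>* u v) \<and>
     card {{i, j} | i j. i \<in> V \<and> j \<in> V \<and> qedge n i j} = card V - 1"

definition subtrees :: "nat \<Rightarrow> nat \<Rightarrow> nat set set" where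
  "subtrees k n = {V. induces_tree n V \<and> card V = k}"

definition I_face :: "nat \<Rightarrow> nat \<Rightarrow> nat set \<Rightarrow> 'k::comm_ring_1 mpoly set" where
  "I_face n a V = gen_ideal (Rn n) (insert (Var a) (Var ` V))"

end

theory Submission
  imports Defs "HOL-Library.Set_Algebras"
begin

text \<open>
  The Stanley--Reisner ideal \<open>I\<close> of a simplicial complex on \<open>V\<close> is spanned by the monomials
  whose support is not a face. So \<open>f \<in> I\<close> iff every monomial of \<open>f\<close> meets \<open>V - F\<close> for each
  facet \<open>F\<close>, i.e. iff \<open>f\<close> lies in each prime \<open>P(V - F)\<close> generated by the variables outside
  \<open>F\<close>. The \<open>m\<close>-th power of \<open>P(A)\<close> consists of the polynomials all of whose monomials have
  degree at least \<open>m\<close> in the variables of \<open>A\<close>, and it is \<open>P(A)\<close>-primary because the parts of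
  lowest degree multiply without cancellation. Each \<open>P(V - F)\<close> is associated to \<open>I\<close>, being the
  colon ideal \<open>(I : x\<^sup>F)\<close>; conversely every associated prime avoids the monomials supported on
  some facet \<open>F\<close>, and multiplication by \<open>(x\<^sup>F)\<^sup>m\<close> maps \<open>P(V - F)\<^sup>m\<close> into \<open>I\<^sup>m\<close>. Hence
  the \<open>m\<close>-th symbolic power of \<open>I\<close> is the intersection of the \<open>P(V - F)\<^sup>m\<close>.

  The facets of \<open>B\<^sub>n\<close> are the sets \<open>{c, i, j}\<close> with \<open>c\<close> an apex and \<open>{i, j}\<close> an edge of
  \<open>Q\<^sub>n\<close>; the complement of such a facet is the other apex together with \<open>{1..n} - {i, j}\<close>,
  and the complements of the edges of \<open>Q\<^sub>n\<close> are exactly its subtrees with \<open>n - 2\<close> vertices.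
\<close>

section \<open>Ideals\<close>

lemma is_idealD:
  assumes "is_ideal R J"
  shows "J \<subseteq> R" and "0 \<in> J" and "\<And>a b. a \<in> J \<Longrightarrow> b \<in> J \<Longrightarrow> a + b \<in> J"
    and "\<And>r a. r \<in> R \<Longrightarrow> a \<in> J \<Longrightarrow> r * a \<in> J"
  using assms unfolding is_ideal_def by auto

lemma is_ideal_sum:
  assumes "is_ideal R J" "finite X" "\<And>x. x \<in> X \<Longrightarrow> h x \<in> J"
  shows "sum h X \<in> J"
  using assms(2,3) by (induction X rule: finite_induct) (simp_all add: is_idealD[OF assms(1)])

lemma gen_ideal_least: "is_ideal R J \<Longrightarrow> S \<subseteq> J \<Longrightarrow> gen_ideal R S \<subseteq> J"
  unfolding gen_ideal_def by blast

lemma generators_subset_gen_ideal: "S \<subseteq> gen_ideal R S"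
  unfolding gen_ideal_def by blast

lemma is_ideal_gen_ideal:
  assumes "is_ideal R J" "S \<subseteq> J"
  shows "is_ideal R (gen_ideal R S)"
  using gen_ideal_least[OF assms] is_idealD(1)[OF assms(1)]
  unfolding is_ideal_def gen_ideal_def by blast

lemma one_notin_proper_ideal:
  assumes "is_ideal R J" "J \<noteq> R"
  shows "(1::'a::comm_ring_1) \<notin> J"
  using assms is_idealD[OF assms(1)] by (metis mult.right_neutral subsetI subset_antisym)

lemma Ass_colon_witness:
  assumes "P \<in> Ass R I" "(1::'a::comm_ring_1) \<in> R"
  obtains g where "g \<in> R" "g \<notin> I" "P = {f \<in> R. f * g \<in> I}"
proof -
  obtain g where g: "g \<in> R" "P = {f \<in> R. f * g \<in> I}" and P: "is_ideal R P" "P \<noteq> R"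
    using assms(1) unfolding Ass_def prime_ideal_def by blast
  have "g \<notin> I"
    using one_notin_proper_ideal[OF P] assms(2) g(2) by auto
  with g show thesis using that by blast
qed

section \<open>Polynomial rings in a set of variables\<close>

definition poly_ring :: "nat set \<Rightarrow> 'k::comm_ring_1 mpoly set" where
  "poly_ring V = {p. \<forall>\<mu>\<in>Poly_Mapping.keys p. Poly_Mapping.keys \<mu> \<subseteq> V}"

lemma Rn_eq_poly_ring: "Rn n = poly_ring {0..n+1}"
  unfolding Rn_def poly_ring_def ..

lemma keys_add_monomial:
  "Poly_Mapping.keys ((\<mu>::nat \<Rightarrow>\<^sub>0 nat) + \<nu>) = Poly_Mapping.keys \<mu> \<union> Poly_Mapping.keys \<nu>"
  by (auto simp: in_keys_iff lookup_add)

lemma poly_ring_add: "p \<in> poly_ring V \<Longrightarrow> q \<in> poly_ring V \<Longrightarrow> p + q \<in> poly_ring V"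
  unfolding poly_ring_def using keys_add[of p q] by blast

lemma poly_ring_mult: "p \<in> poly_ring V \<Longrightarrow> q \<in> poly_ring V \<Longrightarrow> p * q \<in> poly_ring V"
  unfolding poly_ring_def using keys_mult[of p q] keys_add_monomial by blast

lemma single_in_poly_ring: "Poly_Mapping.keys \<mu> \<subseteq> V \<Longrightarrow> Poly_Mapping.single \<mu> c \<in> poly_ring V"
  unfolding poly_ring_def by simp

lemma one_in_poly_ring: "1 \<in> poly_ring V"
  unfolding poly_ring_def by simp

lemma poly_mapping_sum_monomials:
  "p = (\<Sum>\<mu>\<in>Poly_Mapping.keys p. Poly_Mapping.single \<mu> (Poly_Mapping.lookup p \<mu>))"
  by (rule poly_mapping_eqI)
    (simp add: lookup_sum lookup_single when_def sum.delta in_keys_iff)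

lemma lookup_mult_single:
  "Poly_Mapping.lookup (f * Poly_Mapping.single \<gamma> 1) (\<mu> + \<gamma>) = Poly_Mapping.lookup (f::'k::comm_ring_1 mpoly) \<mu>"
proof -
  have "f * Poly_Mapping.single \<gamma> 1
      = (\<Sum>\<beta>\<in>Poly_Mapping.keys f. Poly_Mapping.single (\<beta> + \<gamma>) (Poly_Mapping.lookup f \<beta>))"
    by (subst poly_mapping_sum_monomials[of f]) (simp add: sum_distrib_right mult_single)
  then show ?thesis
    by (simp add: lookup_sum lookup_single when_def sum.delta' in_keys_iff)
qed

lemma keys_mult_single:
  "Poly_Mapping.keys ((f::'k::comm_ring_1 mpoly) * Poly_Mapping.single \<gamma> 1)
     = (\<lambda>\<mu>. \<mu> + \<gamma>) ` Poly_Mapping.keys f"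
proof (intro equalityI subsetI)
  fix x assume "x \<in> Poly_Mapping.keys (f * Poly_Mapping.single \<gamma> 1)"
  then show "x \<in> (\<lambda>\<mu>. \<mu> + \<gamma>) ` Poly_Mapping.keys f"
    using keys_mult[of f "Poly_Mapping.single \<gamma> 1"] by auto
next
  fix x assume "x \<in> (\<lambda>\<mu>. \<mu> + \<gamma>) ` Poly_Mapping.keys f"
  then show "x \<in> Poly_Mapping.keys (f * Poly_Mapping.single \<gamma> 1)"
    by (auto simp: in_keys_iff lookup_mult_single)
qed

lift_definition poly_filter :: "('a \<Rightarrow> bool) \<Rightarrow> ('a \<Rightarrow>\<^sub>0 'b::zero) \<Rightarrow> 'a \<Rightarrow>\<^sub>0 'b"
  is "\<lambda>Q p k. p k when Q k"
  by (erule finite_subset[rotated]) auto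

lemma lookup_poly_filter: "Poly_Mapping.lookup (poly_filter Q p) k = (Poly_Mapping.lookup p k when Q k)"
  by transfer simp

lemma keys_poly_filter: "Poly_Mapping.keys (poly_filter Q p) = {k \<in> Poly_Mapping.keys p. Q k}"
  by (auto simp: in_keys_iff lookup_poly_filter)

lemma poly_filter_split: "p = poly_filter Q p + poly_filter (\<lambda>k. \<not> Q k) p"
  by (rule poly_mapping_eqI) (simp add: lookup_add lookup_poly_filter when_def)

section \<open>Monomial ideals\<close>

definition upward_closed :: "(nat \<Rightarrow>\<^sub>0 nat) set \<Rightarrow> bool" where
  "upward_closed U \<longleftrightarrow> (\<forall>\<mu> \<nu>. \<mu> \<in> U \<longrightarrow> \<mu> + \<nu> \<in> U)"

definition monomial_ideal :: "nat set \<Rightarrow> (nat \<Rightarrow>\<^sub>0 nat) set \<Rightarrow> 'k::comm_ring_1 mpoly set" where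
  "monomial_ideal V U = {f \<in> poly_ring V. Poly_Mapping.keys f \<subseteq> U}"

lemma monomial_ideal_mono: "U \<subseteq> W \<Longrightarrow> monomial_ideal V U \<subseteq> monomial_ideal V W"
  unfolding monomial_ideal_def by blast

lemma monomial_ideal_UNIV: "monomial_ideal V UNIV = poly_ring V"
  unfolding monomial_ideal_def by blast

lemma is_ideal_monomial_ideal:
  assumes "upward_closed U"
  shows "is_ideal (poly_ring V) (monomial_ideal V U :: 'k::comm_ring_1 mpoly set)"
  unfolding is_ideal_def
proof (intro conjI ballI)
  fix r a :: "'k mpoly" assume "r \<in> poly_ring V" "a \<in> monomial_ideal V U"
  moreover have "Poly_Mapping.keys (r * a) \<subseteq> U" if "Poly_Mapping.keys a \<subseteq> U"
    using keys_mult[of r a] assms that unfolding upward_closed_def by (fastforce simp: add.commute)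
  ultimately show "r * a \<in> monomial_ideal V U"
    unfolding monomial_ideal_def by (simp add: poly_ring_mult)
next
  fix a b :: "'k mpoly" assume "a \<in> monomial_ideal V U" "b \<in> monomial_ideal V U"
  then show "a + b \<in> monomial_ideal V U"
    using keys_add[of a b] unfolding monomial_ideal_def by (auto intro: poly_ring_add)
qed (auto simp: monomial_ideal_def poly_ring_def)

lemma mult_single_in_monomial_ideal_iff:
  assumes "(f::'k::comm_ring_1 mpoly) \<in> poly_ring V" "Poly_Mapping.keys \<gamma> \<subseteq> V"
  shows "f * Poly_Mapping.single \<gamma> 1 \<in> monomial_ideal V U
     \<longleftrightarrow> (\<forall>\<mu>\<in>Poly_Mapping.keys f. \<mu> + \<gamma> \<in> U)"
  using poly_ring_mult[OF assms(1) single_in_poly_ring[OF assms(2)]]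
  by (auto simp: monomial_ideal_def keys_mult_single)

lemma gen_ideal_eq_monomial_ideal:
  fixes S :: "'k::comm_ring_1 mpoly set"
  assumes "upward_closed U" and "S \<subseteq> monomial_ideal V U"
    and "\<And>\<mu>. \<mu> \<in> U \<Longrightarrow> Poly_Mapping.keys \<mu> \<subseteq> V \<Longrightarrow>
           \<exists>\<nu> \<rho>. \<mu> = \<rho> + \<nu> \<and> Poly_Mapping.single \<nu> 1 \<in> S"
  shows "gen_ideal (poly_ring V) S = monomial_ideal V U"
proof
  show "gen_ideal (poly_ring V) S \<subseteq> monomial_ideal V U"
    using gen_ideal_least[OF is_ideal_monomial_ideal] assms(1,2) .
  have J: "is_ideal (poly_ring V) (gen_ideal (poly_ring V) S)"
    using is_ideal_gen_ideal[OF is_ideal_monomial_ideal] assms(1,2) .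
  have monomial: "Poly_Mapping.single \<mu> c \<in> gen_ideal (poly_ring V) S"
    if U: "\<mu> \<in> U" and V: "Poly_Mapping.keys \<mu> \<subseteq> V" for \<mu> c
  proof -
    obtain \<nu> \<rho> where \<mu>: "\<mu> = \<rho> + \<nu>" and \<nu>: "Poly_Mapping.single \<nu> 1 \<in> S"
      using assms(3)[OF U V] by blast
    have "Poly_Mapping.single \<rho> c \<in> poly_ring V"
      using V \<mu> by (intro single_in_poly_ring) (auto simp: keys_add_monomial)
    then have "Poly_Mapping.single \<rho> c * Poly_Mapping.single \<nu> 1 \<in> gen_ideal (poly_ring V) S"
      using is_idealD(4)[OF J] \<nu> generators_subset_gen_ideal by blast
    then show ?thesis by (simp add: \<mu> mult_single)
  qed
  show "monomial_ideal V U \<subseteq> gen_ideal (poly_ring V) S"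
  proof
    fix f :: "'k mpoly" assume "f \<in> monomial_ideal V U"
    then have "\<And>\<mu>. \<mu> \<in> Poly_Mapping.keys f \<Longrightarrow>
        Poly_Mapping.single \<mu> (Poly_Mapping.lookup f \<mu>) \<in> gen_ideal (poly_ring V) S"
      using monomial unfolding monomial_ideal_def poly_ring_def by blast
    then have "(\<Sum>\<mu>\<in>Poly_Mapping.keys f. Poly_Mapping.single \<mu> (Poly_Mapping.lookup f \<mu>))
        \<in> gen_ideal (poly_ring V) S"
      by (rule is_ideal_sum[OF J finite_keys])
    then show "f \<in> gen_ideal (poly_ring V) S"
      by (simp only: poly_mapping_sum_monomials[of f, symmetric])
  qed
qed

lemma upward_closed_set_plus: "upward_closed U \<Longrightarrow> upward_closed (U + W)"
  unfolding upward_closed_def set_plus_def by (auto simp: add.assoc) (metis add.commute add.assoc)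

lemma ideal_mult_monomial_ideal:
  assumes "upward_closed U" "upward_closed W"
  shows "ideal_mult (poly_ring V) (monomial_ideal V U) (monomial_ideal V W)
       = (monomial_ideal V (U + W) :: 'k::comm_ring_1 mpoly set)"
  unfolding ideal_mult_def
proof (rule gen_ideal_eq_monomial_ideal[OF upward_closed_set_plus[OF assms(1)]])
  show "{a * b |a b. a \<in> (monomial_ideal V U :: 'k mpoly set) \<and> b \<in> monomial_ideal V W}
      \<subseteq> monomial_ideal V (U + W)"
  proof clarify
    fix a b :: "'k mpoly" assume "a \<in> monomial_ideal V U" "b \<in> monomial_ideal V W"
    then show "a * b \<in> monomial_ideal V (U + W)"
      using keys_mult[of a b] by (fastforce simp: monomial_ideal_def poly_ring_mult set_plus_def)
  qed
  fix \<mu> assume "\<mu> \<in> U + W" "Poly_Mapping.keys \<mu> \<subseteq> V"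
  then obtain u w where "\<mu> = u + w" "u \<in> U" "w \<in> W" "Poly_Mapping.keys u \<subseteq> V" "Poly_Mapping.keys w \<subseteq> V"
    by (auto simp: set_plus_def keys_add_monomial)
  then have "Poly_Mapping.single \<mu> 1 = Poly_Mapping.single u 1 * Poly_Mapping.single w (1::'k)"
      "Poly_Mapping.single u 1 \<in> (monomial_ideal V U :: 'k mpoly set)"
      "Poly_Mapping.single w 1 \<in> (monomial_ideal V W :: 'k mpoly set)"
    by (auto simp: mult_single monomial_ideal_def single_in_poly_ring)
  then show "\<exists>\<nu> \<rho>. \<mu> = \<rho> + \<nu> \<and> Poly_Mapping.single \<nu> 1
      \<in> {a * b |a b. a \<in> (monomial_ideal V U :: 'k mpoly set) \<and> b \<in> monomial_ideal V W}"
    by (metis (mono_tags, lifting) add_0 mem_Collect_eq)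
qed

text \<open>UNIV is the neutral element of set addition on upward closed sets, which matches
  \<open>ideal_pow R I 0 = R\<close>.\<close>

fun set_plus_power :: "(nat \<Rightarrow>\<^sub>0 nat) set \<Rightarrow> nat \<Rightarrow> (nat \<Rightarrow>\<^sub>0 nat) set" where
  "set_plus_power U 0 = UNIV"
| "set_plus_power U (Suc m) = U + set_plus_power U m"

lemma upward_closed_set_plus_power: "upward_closed U \<Longrightarrow> upward_closed (set_plus_power U m)"
  by (cases m) (simp_all add: upward_closed_set_plus, simp add: upward_closed_def)

lemma set_plus_power_mono: "U \<subseteq> W \<Longrightarrow> set_plus_power U m \<subseteq> set_plus_power W m"
  by (induction m) (auto simp: set_plus_def)

lemma ideal_pow_monomial_ideal:
  assumes "upward_closed U"
  shows "ideal_pow (poly_ring V) (monomial_ideal V U) m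
       = (monomial_ideal V (set_plus_power U m) :: 'k::comm_ring_1 mpoly set)"
  by (induction m)
    (simp_all add: monomial_ideal_UNIV ideal_mult_monomial_ideal assms upward_closed_set_plus_power)

section \<open>Ideals generated by variables\<close>

definition deg_in :: "nat set \<Rightarrow> (nat \<Rightarrow>\<^sub>0 nat) \<Rightarrow> nat" where
  "deg_in A \<mu> = (\<Sum>i\<in>A. Poly_Mapping.lookup \<mu> i)"

definition deg_at_least :: "nat set \<Rightarrow> nat \<Rightarrow> (nat \<Rightarrow>\<^sub>0 nat) set" where
  "deg_at_least A m = {\<mu>. m \<le> deg_in A \<mu>}"

lemma deg_in_add: "deg_in A (\<mu> + \<nu>) = deg_in A \<mu> + deg_in A \<nu>"
  unfolding deg_in_def lookup_add by (rule sum.distrib)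

lemma deg_in_single: "finite A \<Longrightarrow> deg_in A (Poly_Mapping.single i k) = (if i \<in> A then k else 0)"
  unfolding deg_in_def lookup_single when_def by (simp add: sum.delta')

lemma deg_in_eq_0_iff: "finite A \<Longrightarrow> deg_in A \<mu> = 0 \<longleftrightarrow> Poly_Mapping.keys \<mu> \<inter> A = {}"
  unfolding deg_in_def by (auto simp: in_keys_iff)

lemma deg_at_least_1_iff: "finite A \<Longrightarrow> \<mu> \<in> deg_at_least A 1 \<longleftrightarrow> Poly_Mapping.keys \<mu> \<inter> A \<noteq> {}"
  unfolding deg_at_least_def using deg_in_eq_0_iff[of A \<mu>] by auto

lemma deg_at_least_Suc_split:
  assumes "finite A" "\<mu> \<in> deg_at_least A (Suc m)"
  obtains i \<nu> where "i \<in> A" "\<mu> = Poly_Mapping.single i 1 + \<nu>" "\<nu> \<in> deg_at_least A m"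
proof -
  obtain i where i: "i \<in> A" "Poly_Mapping.lookup \<mu> i \<noteq> 0"
    using assms deg_in_eq_0_iff[of A \<mu>] by (fastforce simp: deg_at_least_def in_keys_iff)
  define \<nu> where "\<nu> = \<mu> - Poly_Mapping.single i 1"
  have \<mu>: "\<mu> = Poly_Mapping.single i 1 + \<nu>"
    unfolding \<nu>_def using i(2)
    by (intro poly_mapping_eqI) (auto simp: lookup_add lookup_minus lookup_single when_def)
  then have "\<nu> \<in> deg_at_least A m"
    using assms i(1) by (simp add: deg_at_least_def deg_in_add deg_in_single)
  then show thesis using that i(1) \<mu> by blast
qed

lemma upward_closed_deg_at_least: "upward_closed (deg_at_least A m)"
  unfolding upward_closed_def deg_at_least_def by (simp add: deg_in_add)

lemma set_plus_power_deg_at_least: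
  assumes "finite A"
  shows "set_plus_power (deg_at_least A 1) m = deg_at_least A m"
proof (induction m)
  case 0
  show ?case by (simp add: deg_at_least_def)
next
  case (Suc m)
  have "deg_at_least A 1 + deg_at_least A m = deg_at_least A (Suc m)"
  proof (intro equalityI subsetI)
    fix \<mu> assume "\<mu> \<in> deg_at_least A 1 + deg_at_least A m"
    then show "\<mu> \<in> deg_at_least A (Suc m)"
      by (auto simp: set_plus_def deg_at_least_def deg_in_add)
  next
    fix \<mu> assume "\<mu> \<in> deg_at_least A (Suc m)"
    then obtain i \<nu> where "i \<in> A" "\<mu> = Poly_Mapping.single i 1 + \<nu>" "\<nu> \<in> deg_at_least A m"
      using deg_at_least_Suc_split[OF assms] by blast
    moreover have "Poly_Mapping.single i 1 \<in> deg_at_least A 1" if "i \<in> A" for i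
      using that assms by (simp add: deg_at_least_def deg_in_single)
    ultimately show "\<mu> \<in> deg_at_least A 1 + deg_at_least A m"
      by (auto simp: set_plus_def)
  qed
  with Suc show ?case by simp
qed

definition var_ideal :: "nat set \<Rightarrow> nat set \<Rightarrow> 'k::comm_ring_1 mpoly set" where
  "var_ideal V A = gen_ideal (poly_ring V) (Var ` A)"

lemma var_ideal_eq_monomial_ideal:
  assumes "finite A" "A \<subseteq> V"
  shows "var_ideal V A = (monomial_ideal V (deg_at_least A 1) :: 'k::comm_ring_1 mpoly set)"
  unfolding var_ideal_def
proof (rule gen_ideal_eq_monomial_ideal[OF upward_closed_deg_at_least])
  show "(Var ` A :: 'k mpoly set) \<subseteq> monomial_ideal V (deg_at_least A 1)"
    using assms by (auto simp: Var_def monomial_ideal_def deg_at_least_def deg_in_single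
        intro!: single_in_poly_ring)
  fix \<mu> assume "\<mu> \<in> deg_at_least A 1"
  then obtain i \<nu> where "i \<in> A" "\<mu> = Poly_Mapping.single i 1 + \<nu>"
    using deg_at_least_Suc_split[OF assms(1)] by (metis One_nat_def)
  then show "\<exists>\<nu> \<rho>. \<mu> = \<rho> + \<nu> \<and> Poly_Mapping.single \<nu> 1 \<in> (Var ` A :: 'k mpoly set)"
    by (metis Var_def add.commute image_eqI)
qed

lemma ideal_pow_var_ideal:
  assumes "finite A" "A \<subseteq> V"
  shows "ideal_pow (poly_ring V) (var_ideal V A) m
       = (monomial_ideal V (deg_at_least A m) :: 'k::comm_ring_1 mpoly set)"
  unfolding var_ideal_eq_monomial_ideal[OF assms] ideal_pow_monomial_ideal[OF upward_closed_deg_at_least]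
    set_plus_power_deg_at_least[OF assms(1)] ..

lemma deg_in_keys_mult:
  assumes "\<gamma> \<in> Poly_Mapping.keys (p * q)"
  obtains \<alpha> \<beta> where "\<alpha> \<in> Poly_Mapping.keys p" "\<beta> \<in> Poly_Mapping.keys q"
    "deg_in A \<gamma> = deg_in A \<alpha> + deg_in A \<beta>"
  using keys_mult[of p q] assms deg_in_add by blast

lemma deg_in_keys_mult_gt:
  assumes "\<gamma> \<in> Poly_Mapping.keys (p * q)"
    and "\<And>\<alpha>. \<alpha> \<in> Poly_Mapping.keys p \<Longrightarrow> a \<le> deg_in A \<alpha>"
    and "\<And>\<beta>. \<beta> \<in> Poly_Mapping.keys q \<Longrightarrow> b \<le> deg_in A \<beta>"
    and "(\<forall>\<alpha>\<in>Poly_Mapping.keys p. a < deg_in A \<alpha>) \<or> (\<forall>\<beta>\<in>Poly_Mapping.keys q. b < deg_in A \<beta>)"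
  shows "a + b < deg_in A \<gamma>"
proof -
  obtain \<alpha> \<beta> where "\<alpha> \<in> Poly_Mapping.keys p" "\<beta> \<in> Poly_Mapping.keys q"
    and "deg_in A \<gamma> = deg_in A \<alpha> + deg_in A \<beta>"
    using assms(1) by (rule deg_in_keys_mult)
  with assms(2-4) show ?thesis
    by (auto intro: add_le_less_mono add_less_le_mono)
qed

text \<open>The product of the parts of lowest \<open>A\<close>-degree is nonzero and cannot cancel against
  the remaining products, all of which have larger \<open>A\<close>-degree.\<close>

lemma lowest_deg_in_mult:
  fixes s f :: "'k::idom mpoly"
  assumes "s \<noteq> 0" "f \<noteq> 0"
  shows "\<exists>\<gamma>\<in>Poly_Mapping.keys (s * f).
    deg_in A \<gamma> = Min (deg_in A ` Poly_Mapping.keys s) + Min (deg_in A ` Poly_Mapping.keys f)"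
proof -
  define a where "a = Min (deg_in A ` Poly_Mapping.keys s)"
  define b where "b = Min (deg_in A ` Poly_Mapping.keys f)"
  have a_le: "\<And>\<alpha>. \<alpha> \<in> Poly_Mapping.keys s \<Longrightarrow> a \<le> deg_in A \<alpha>"
    and b_le: "\<And>\<beta>. \<beta> \<in> Poly_Mapping.keys f \<Longrightarrow> b \<le> deg_in A \<beta>"
    unfolding a_def b_def by simp_all
  have "a \<in> deg_in A ` Poly_Mapping.keys s" "b \<in> deg_in A ` Poly_Mapping.keys f"
    unfolding a_def b_def using assms by (simp_all add: Min_in)
  define s0 where "s0 = poly_filter (\<lambda>\<alpha>. deg_in A \<alpha> = a) s"
  define s1 where "s1 = poly_filter (\<lambda>\<alpha>. deg_in A \<alpha> \<noteq> a) s"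
  define f0 where "f0 = poly_filter (\<lambda>\<beta>. deg_in A \<beta> = b) f"
  define f1 where "f1 = poly_filter (\<lambda>\<beta>. deg_in A \<beta> \<noteq> b) f"
  have keys: "Poly_Mapping.keys s0 = {\<alpha> \<in> Poly_Mapping.keys s. deg_in A \<alpha> = a}"
    "Poly_Mapping.keys s1 = {\<alpha> \<in> Poly_Mapping.keys s. deg_in A \<alpha> \<noteq> a}"
    "Poly_Mapping.keys f0 = {\<beta> \<in> Poly_Mapping.keys f. deg_in A \<beta> = b}"
    "Poly_Mapping.keys f1 = {\<beta> \<in> Poly_Mapping.keys f. deg_in A \<beta> \<noteq> b}"
    unfolding s0_def s1_def f0_def f1_def keys_poly_filter by simp_all
  have "Poly_Mapping.keys s0 \<noteq> {}" "Poly_Mapping.keys f0 \<noteq> {}"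
    using \<open>a \<in> _\<close> \<open>b \<in> _\<close> unfolding keys by auto
  then have "s0 * f0 \<noteq> 0" by simp
  then obtain \<gamma> where \<gamma>: "\<gamma> \<in> Poly_Mapping.keys (s0 * f0)"
    by (metis all_not_in_conv keys_eq_empty)
  have deg_\<gamma>: "deg_in A \<gamma> = a + b"
    using \<gamma> keys(1,3) by (elim deg_in_keys_mult[where A = A]) auto
  have "a + b < deg_in A \<gamma>'" if "\<gamma>' \<in> Poly_Mapping.keys (s0 * f1)" for \<gamma>'
    using that by (rule deg_in_keys_mult_gt) (use keys a_le b_le in \<open>auto simp: le_neq_implies_less\<close>)
  moreover have "a + b < deg_in A \<gamma>'" if "\<gamma>' \<in> Poly_Mapping.keys (s1 * f)" for \<gamma>'
    using that by (rule deg_in_keys_mult_gt) (use keys a_le b_le in \<open>auto simp: le_neq_implies_less\<close>)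
  ultimately have "a + b < deg_in A \<gamma>'" if "\<gamma>' \<in> Poly_Mapping.keys (s0 * f1 + s1 * f)" for \<gamma>'
    using that keys_add[of "s0 * f1" "s1 * f"] by blast
  then have "\<gamma> \<notin> Poly_Mapping.keys (s0 * f1 + s1 * f)"
    using deg_\<gamma> by fastforce
  moreover have "s = s0 + s1" "f = f0 + f1"
    unfolding s0_def s1_def f0_def f1_def by (rule poly_filter_split)+
  then have "s * f = s0 * f0 + (s0 * f1 + s1 * f)"
    by (simp add: algebra_simps)
  ultimately have "\<gamma> \<in> Poly_Mapping.keys (s * f)"
    using \<gamma> by (simp add: in_keys_iff lookup_add)
  then show ?thesis using deg_\<gamma> unfolding a_def b_def by blast
qed

lemma var_ideal_power_primary:
  fixes s f :: "'k::idom mpoly"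
  assumes A: "finite A" "A \<subseteq> V"
    and s: "s \<in> poly_ring V" "s \<notin> var_ideal V A"
    and f: "f \<in> poly_ring V" and sf: "s * f \<in> ideal_pow (poly_ring V) (var_ideal V A) m"
  shows "f \<in> ideal_pow (poly_ring V) (var_ideal V A) m"
proof (rule ccontr)
  assume "f \<notin> ideal_pow (poly_ring V) (var_ideal V A) m"
  then have "\<not> Poly_Mapping.keys f \<subseteq> deg_at_least A m"
    using f unfolding ideal_pow_var_ideal[OF A] monomial_ideal_def by blast
  then obtain \<beta> where \<beta>: "\<beta> \<in> Poly_Mapping.keys f" "\<not> m \<le> deg_in A \<beta>"
    unfolding deg_at_least_def by blast
  have "\<not> Poly_Mapping.keys s \<subseteq> deg_at_least A 1"
    using s unfolding var_ideal_eq_monomial_ideal[OF A] monomial_ideal_def by blast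
  then obtain \<alpha> where \<alpha>: "\<alpha> \<in> Poly_Mapping.keys s" "\<not> 1 \<le> deg_in A \<alpha>"
    unfolding deg_at_least_def by blast
  have Min_le: "Min (deg_in A ` Poly_Mapping.keys p) \<le> deg_in A \<mu>"
    if "\<mu> \<in> Poly_Mapping.keys p" for p :: "'k mpoly" and \<mu>
    using that by simp
  have "Min (deg_in A ` Poly_Mapping.keys s) = 0"
    using Min_le[OF \<alpha>(1)] \<alpha>(2) by linarith
  moreover have "Min (deg_in A ` Poly_Mapping.keys f) < m"
    using Min_le[OF \<beta>(1)] \<beta>(2) by linarith
  ultimately obtain \<gamma> where "\<gamma> \<in> Poly_Mapping.keys (s * f)" "deg_in A \<gamma> < m"
    using lowest_deg_in_mult[of s f A] \<alpha>(1) \<beta>(1) by fastforce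
  then show False
    using sf unfolding ideal_pow_var_ideal[OF A] monomial_ideal_def deg_at_least_def by auto
qed

lemma prime_ideal_var_ideal:
  assumes "finite A" "A \<subseteq> V"
  shows "prime_ideal (poly_ring V) (var_ideal V A :: 'k::idom mpoly set)"
  unfolding prime_ideal_def
proof (intro conjI ballI impI)
  show "is_ideal (poly_ring V) (var_ideal V A :: 'k mpoly set)"
    unfolding var_ideal_eq_monomial_ideal[OF assms] by (rule is_ideal_monomial_ideal[OF upward_closed_deg_at_least])
  have "(1::'k mpoly) \<notin> var_ideal V A"
    unfolding var_ideal_eq_monomial_ideal[OF assms] by (simp add: monomial_ideal_def deg_at_least_def deg_in_def)
  then show "var_ideal V A \<noteq> (poly_ring V :: 'k mpoly set)"
    using one_in_poly_ring by blast
  have pow1: "ideal_pow (poly_ring V) (var_ideal V A) 1 = (var_ideal V A :: 'k mpoly set)"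
    by (subst ideal_pow_var_ideal[OF assms]) (simp add: var_ideal_eq_monomial_ideal[OF assms])
  fix a b :: "'k mpoly"
  assume "a \<in> poly_ring V" "b \<in> poly_ring V" "a * b \<in> var_ideal V A"
  then show "a \<in> var_ideal V A \<or> b \<in> var_ideal V A"
    using var_ideal_power_primary[OF assms, of a b 1] unfolding pow1 by blast
qed

section \<open>Stanley--Reisner ideals\<close>

definition monomial_on :: "nat set \<Rightarrow> nat \<Rightarrow> nat \<Rightarrow>\<^sub>0 nat" where
  "monomial_on \<sigma> k = (\<Sum>i\<in>\<sigma>. Poly_Mapping.single i k)"

lemma lookup_monomial_on:
  "finite \<sigma> \<Longrightarrow> Poly_Mapping.lookup (monomial_on \<sigma> k) j = (if j \<in> \<sigma> then k else 0)"
  by (simp add: monomial_on_def lookup_sum lookup_single when_def sum.delta')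

lemma keys_monomial_on_subset: "finite \<sigma> \<Longrightarrow> Poly_Mapping.keys (monomial_on \<sigma> k) \<subseteq> \<sigma>"
  by (auto simp: in_keys_iff lookup_monomial_on split: if_splits)

lemma keys_monomial_on: "finite \<sigma> \<Longrightarrow> k \<noteq> 0 \<Longrightarrow> Poly_Mapping.keys (monomial_on \<sigma> k) = \<sigma>"
  by (auto simp: in_keys_iff lookup_monomial_on split: if_splits)

lemma monomial_on_Suc: "monomial_on \<sigma> (Suc k) = monomial_on \<sigma> 1 + monomial_on \<sigma> k"
  unfolding monomial_on_def Suc_eq_plus1_left single_add sum.distrib ..

lemma prod_Var:
  "finite \<sigma> \<Longrightarrow> (\<Prod>i\<in>\<sigma>. Var i) = (Poly_Mapping.single (monomial_on \<sigma> 1) 1 :: 'k::comm_ring_1 mpoly)"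
  by (induction \<sigma> rule: finite_induct) (simp_all add: monomial_on_def Var_def mult_single)

lemma monomial_split_support:
  "(\<mu>::nat \<Rightarrow>\<^sub>0 nat) = (\<mu> - monomial_on (Poly_Mapping.keys \<mu>) 1) + monomial_on (Poly_Mapping.keys \<mu>) 1"
proof (rule poly_mapping_eqI)
  fix k
  show "Poly_Mapping.lookup \<mu> k = Poly_Mapping.lookup (\<mu> - monomial_on (Poly_Mapping.keys \<mu>) 1
      + monomial_on (Poly_Mapping.keys \<mu>) 1) k"
    by (simp add: lookup_add lookup_minus lookup_monomial_on in_keys_iff)
qed

definition SR_ideal :: "nat set \<Rightarrow> (nat set \<Rightarrow> bool) \<Rightarrow> 'k::comm_ring_1 mpoly set" where
  "SR_ideal V face = gen_ideal (poly_ring V) {\<Prod>i\<in>\<sigma>. Var i | \<sigma>. \<sigma> \<subseteq> V \<and> \<not> face \<sigma>}"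

locale simplicial_complex =
  fixes V :: "nat set" and face :: "nat set \<Rightarrow> bool"
  assumes finite_vertices: "finite V"
    and face_subset_vertices: "face \<sigma> \<Longrightarrow> \<sigma> \<subseteq> V"
    and face_subset: "face \<tau> \<Longrightarrow> \<sigma> \<subseteq> \<tau> \<Longrightarrow> face \<sigma>"
    and face_empty: "face {}"
begin

definition facet :: "nat set \<Rightarrow> bool" where
  "facet F \<longleftrightarrow> face F \<and> (\<forall>G. face G \<longrightarrow> F \<subseteq> G \<longrightarrow> G = F)"

lemma face_subset_facet:
  assumes "face \<sigma>"
  obtains F where "facet F" "\<sigma> \<subseteq> F"
proof -
  have "finite {\<tau>. face \<tau> \<and> \<sigma> \<subseteq> \<tau>}"
    by (rule finite_subset[of _ "Pow V"]) (use finite_vertices face_subset_vertices in auto)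
  then obtain F where "F \<in> {\<tau>. face \<tau> \<and> \<sigma> \<subseteq> \<tau>}" "\<sigma> \<subseteq> F"
    and "\<forall>G \<in> {\<tau>. face \<tau> \<and> \<sigma> \<subseteq> \<tau>}. F \<subseteq> G \<longrightarrow> F = G"
    using finite_has_maximal2[of "{\<tau>. face \<tau> \<and> \<sigma> \<subseteq> \<tau>}" \<sigma>] assms by blast
  then have "facet F" unfolding facet_def by auto
  then show thesis using \<open>\<sigma> \<subseteq> F\<close> by (rule that)
qed

lemma ex_facet: "\<exists>F. facet F"
  using face_subset_facet[OF face_empty] by metis

lemma facet_subset_vertices: "facet F \<Longrightarrow> F \<subseteq> V"
  unfolding facet_def using face_subset_vertices by blast

lemma finite_facet: "facet F \<Longrightarrow> finite F"
  using facet_subset_vertices finite_vertices finite_subset by blast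

lemma keys_monomial_on_facet: "facet F \<Longrightarrow> Poly_Mapping.keys (monomial_on F k) \<subseteq> V"
  using keys_monomial_on_subset finite_facet facet_subset_vertices by blast

lemma face_union_facet_iff: "facet F \<Longrightarrow> face (\<sigma> \<union> F) \<longleftrightarrow> \<sigma> \<subseteq> F"
  unfolding facet_def by (metis Un_upper2 sup.absorb_iff2)

text \<open>Only the support inside \<open>V\<close> counts, so that a non-face monomial has positive degree in
  \<open>V - F\<close> for every facet \<open>F\<close>.\<close>

definition nonface_monomials :: "(nat \<Rightarrow>\<^sub>0 nat) set" where
  "nonface_monomials = {\<mu>. \<not> face (Poly_Mapping.keys \<mu> \<inter> V)}"

lemma upward_closed_nonface_monomials: "upward_closed nonface_monomials"
  unfolding upward_closed_def nonface_monomials_def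
proof (intro allI impI CollectI)
  fix \<mu> \<nu> :: "nat \<Rightarrow>\<^sub>0 nat"
  assume "\<mu> \<in> {\<mu>. \<not> face (Poly_Mapping.keys \<mu> \<inter> V)}"
  then show "\<not> face (Poly_Mapping.keys (\<mu> + \<nu>) \<inter> V)"
    using face_subset[of "Poly_Mapping.keys (\<mu> + \<nu>) \<inter> V" "Poly_Mapping.keys \<mu> \<inter> V"]
    by (auto simp: keys_add_monomial)
qed

lemma SR_ideal_eq_monomial_ideal:
  "SR_ideal V face = (monomial_ideal V nonface_monomials :: 'k::comm_ring_1 mpoly set)"
  unfolding SR_ideal_def
proof (rule gen_ideal_eq_monomial_ideal[OF upward_closed_nonface_monomials])
  show "{\<Prod>i\<in>\<sigma>. Var i | \<sigma>. \<sigma> \<subseteq> V \<and> \<not> face \<sigma>} \<subseteq> (monomial_ideal V nonface_monomials :: 'k mpoly set)"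
  proof clarify
    fix \<sigma> assume "\<sigma> \<subseteq> V" "\<not> face \<sigma>"
    moreover have "finite \<sigma>"
      using \<open>\<sigma> \<subseteq> V\<close> finite_vertices finite_subset by blast
    ultimately show "(\<Prod>i\<in>\<sigma>. Var i) \<in> (monomial_ideal V nonface_monomials :: 'k mpoly set)"
      by (simp add: prod_Var monomial_ideal_def nonface_monomials_def keys_monomial_on Int_absorb2
          single_in_poly_ring)
  qed
  fix \<mu> assume "\<mu> \<in> nonface_monomials" "Poly_Mapping.keys \<mu> \<subseteq> V"
  then have "(\<Prod>i\<in>Poly_Mapping.keys \<mu>. Var i :: 'k mpoly) \<in> {\<Prod>i\<in>\<sigma>. Var i | \<sigma>. \<sigma> \<subseteq> V \<and> \<not> face \<sigma>}"
    by (auto simp: nonface_monomials_def Int_absorb2)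
  then have "Poly_Mapping.single (monomial_on (Poly_Mapping.keys \<mu>) 1) 1
      \<in> ({\<Prod>i\<in>\<sigma>. Var i | \<sigma>. \<sigma> \<subseteq> V \<and> \<not> face \<sigma>} :: 'k mpoly set)"
    by (simp only: prod_Var[OF finite_keys])
  then show "\<exists>\<nu> \<rho>. \<mu> = \<rho> + \<nu> \<and>
      Poly_Mapping.single \<nu> 1 \<in> ({\<Prod>i\<in>\<sigma>. Var i | \<sigma>. \<sigma> \<subseteq> V \<and> \<not> face \<sigma>} :: 'k mpoly set)"
    using monomial_split_support[of \<mu>] by blast
qed

lemma var_ideal_complement_facet:
  "facet F \<Longrightarrow> var_ideal V (V - F) = (monomial_ideal V (deg_at_least (V - F) 1) :: 'k::comm_ring_1 mpoly set)"
  using finite_vertices by (simp add: var_ideal_eq_monomial_ideal)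

lemma ideal_pow_var_ideal_complement_facet:
  "facet F \<Longrightarrow> ideal_pow (poly_ring V) (var_ideal V (V - F)) m
     = (monomial_ideal V (deg_at_least (V - F) m) :: 'k::comm_ring_1 mpoly set)"
  using finite_vertices by (simp add: ideal_pow_var_ideal)

lemma nonface_monomials_iff:
  assumes "Poly_Mapping.keys \<mu> \<subseteq> V"
  shows "\<mu> \<in> nonface_monomials \<longleftrightarrow> (\<forall>F. facet F \<longrightarrow> \<mu> \<in> deg_at_least (V - F) 1)"
proof -
  have "\<mu> \<in> nonface_monomials \<longleftrightarrow> \<not> face (Poly_Mapping.keys \<mu>)"
    using assms by (simp add: nonface_monomials_def Int_absorb2)
  also have "\<dots> \<longleftrightarrow> (\<forall>F. facet F \<longrightarrow> \<not> Poly_Mapping.keys \<mu> \<subseteq> F)"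
  proof
    assume "\<not> face (Poly_Mapping.keys \<mu>)"
    then show "\<forall>F. facet F \<longrightarrow> \<not> Poly_Mapping.keys \<mu> \<subseteq> F"
      using face_subset unfolding facet_def by blast
  next
    assume "\<forall>F. facet F \<longrightarrow> \<not> Poly_Mapping.keys \<mu> \<subseteq> F"
    then show "\<not> face (Poly_Mapping.keys \<mu>)"
      using face_subset_facet by metis
  qed
  also have "\<dots> \<longleftrightarrow> (\<forall>F. facet F \<longrightarrow> \<mu> \<in> deg_at_least (V - F) 1)"
  proof -
    have "\<mu> \<in> deg_at_least (V - F) 1 \<longleftrightarrow> \<not> Poly_Mapping.keys \<mu> \<subseteq> F" for F
      using assms deg_at_least_1_iff[of "V - F" \<mu>] finite_vertices by auto
    then show ?thesis by blast
  qed
  finally show ?thesis .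
qed

theorem SR_ideal_eq_Inter_facets:
  "SR_ideal V face = (\<Inter>F\<in>Collect facet. var_ideal V (V - F) :: 'k::comm_ring_1 mpoly set)"
proof -
  obtain F0 where "facet F0" using ex_facet ..
  have "f \<in> monomial_ideal V nonface_monomials \<longleftrightarrow> (\<forall>F. facet F \<longrightarrow> f \<in> monomial_ideal V (deg_at_least (V - F) 1))"
    for f :: "'k mpoly"
    using nonface_monomials_iff \<open>facet F0\<close> unfolding monomial_ideal_def poly_ring_def by blast
  then show ?thesis
    by (auto simp: SR_ideal_eq_monomial_ideal var_ideal_complement_facet)
qed

lemma ideal_pow_SR_ideal:
  "ideal_pow (poly_ring V) (SR_ideal V face) m
     = (monomial_ideal V (set_plus_power nonface_monomials m) :: 'k::comm_ring_1 mpoly set)"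
  unfolding SR_ideal_eq_monomial_ideal by (rule ideal_pow_monomial_ideal[OF upward_closed_nonface_monomials])

lemma nonface_monomials_subset:
  assumes "facet F"
  shows "nonface_monomials \<subseteq> deg_at_least (V - F) 1"
proof
  fix \<mu> assume "\<mu> \<in> nonface_monomials"
  then have "\<not> Poly_Mapping.keys \<mu> \<inter> V \<subseteq> F"
    using assms face_subset[of F "Poly_Mapping.keys \<mu> \<inter> V"]
    unfolding nonface_monomials_def facet_def by blast
  then show "\<mu> \<in> deg_at_least (V - F) 1"
    using deg_at_least_1_iff[of "V - F" \<mu>] finite_vertices by auto
qed

lemma shift_by_facet_nonface_iff:
  assumes "facet F" "Poly_Mapping.keys \<mu> \<subseteq> V"
  shows "\<mu> + monomial_on F 1 \<in> nonface_monomials \<longleftrightarrow> \<mu> \<in> deg_at_least (V - F) 1"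
proof -
  have "Poly_Mapping.keys (\<mu> + monomial_on F 1) \<inter> V = Poly_Mapping.keys \<mu> \<union> F"
    using assms facet_subset_vertices[OF assms(1)]
    by (auto simp: keys_add_monomial keys_monomial_on finite_facet)
  then show ?thesis
    using assms deg_at_least_1_iff[of "V - F" \<mu>] finite_vertices face_union_facet_iff[OF assms(1)]
    by (auto simp: nonface_monomials_def)
qed

lemma shift_by_facet_in_nonface_power:
  assumes "facet F" "\<mu> \<in> deg_at_least (V - F) m"
  shows "\<mu> + monomial_on F m \<in> set_plus_power nonface_monomials m"
  using assms(2)
proof (induction m arbitrary: \<mu>)
  case 0
  show ?case by simp
next
  case (Suc m)
  obtain i \<nu> where i: "i \<in> V - F" and \<mu>: "\<mu> = Poly_Mapping.single i 1 + \<nu>"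
    and \<nu>: "\<nu> \<in> deg_at_least (V - F) m"
    using deg_at_least_Suc_split[OF _ Suc.prems] finite_vertices by blast
  have "Poly_Mapping.single i 1 + monomial_on F 1 \<in> nonface_monomials"
    using i finite_vertices
    by (subst shift_by_facet_nonface_iff[OF assms(1)]) (simp_all add: deg_at_least_def deg_in_single)
  moreover have "\<mu> + monomial_on F (Suc m)
      = (Poly_Mapping.single i 1 + monomial_on F 1) + (\<nu> + monomial_on F m)"
    unfolding \<mu> monomial_on_Suc by (simp add: ac_simps)
  ultimately show ?case
    using Suc.IH[OF \<nu>] by (auto simp: set_plus_def)
qed

lemma colon_SR_ideal_facet:
  assumes "facet F"
  shows "var_ideal V (V - F) = {h \<in> poly_ring V.
    h * Poly_Mapping.single (monomial_on F 1) 1 \<in> (SR_ideal V face :: 'k::comm_ring_1 mpoly set)}"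
proof -
  note keys = keys_monomial_on_facet[OF assms, of 1]
  have "h \<in> monomial_ideal V (deg_at_least (V - F) 1)
      \<longleftrightarrow> h * Poly_Mapping.single (monomial_on F 1) 1 \<in> monomial_ideal V nonface_monomials"
    if "h \<in> poly_ring V" for h :: "'k mpoly"
  proof -
    have "h * Poly_Mapping.single (monomial_on F 1) 1 \<in> monomial_ideal V nonface_monomials
        \<longleftrightarrow> (\<forall>\<mu>\<in>Poly_Mapping.keys h. \<mu> + monomial_on F 1 \<in> nonface_monomials)"
      by (rule mult_single_in_monomial_ideal_iff[OF that keys])
    also have "\<dots> \<longleftrightarrow> Poly_Mapping.keys h \<subseteq> deg_at_least (V - F) 1"
      using that shift_by_facet_nonface_iff[OF assms] unfolding poly_ring_def by auto
    finally show ?thesis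
      using that unfolding monomial_ideal_def by blast
  qed
  then show ?thesis
    unfolding var_ideal_complement_facet[OF assms] SR_ideal_eq_monomial_ideal
    by (auto simp: monomial_ideal_def)
qed

lemma var_ideal_complement_facet_in_Ass:
  assumes "facet F"
  shows "var_ideal V (V - F) \<in> Ass (poly_ring V) (SR_ideal V face :: 'k::idom mpoly set)"
  unfolding Ass_def
proof (intro CollectI conjI bexI)
  show "prime_ideal (poly_ring V) (var_ideal V (V - F) :: 'k mpoly set)"
    using finite_vertices by (intro prime_ideal_var_ideal) auto
  show "Poly_Mapping.single (monomial_on F 1) 1 \<in> (poly_ring V :: 'k mpoly set)"
    by (rule single_in_poly_ring[OF keys_monomial_on_facet[OF assms]])
qed (rule colon_SR_ideal_facet[OF assms])

lemma symb_pow_SR_ideal_subset_ideal_pow: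
  assumes F: "facet F"
  shows "symb_pow (poly_ring V) (SR_ideal V face) m
    \<subseteq> (ideal_pow (poly_ring V) (var_ideal V (V - F)) m :: 'k::idom mpoly set)"
proof
  fix f :: "'k mpoly"
  assume f: "f \<in> symb_pow (poly_ring V) (SR_ideal V face) m"
  have A: "finite (V - F)" "V - F \<subseteq> V"
    using finite_vertices by auto
  obtain s where s: "s \<in> poly_ring V" "s \<notin> var_ideal V (V - F)"
    and sf: "s * f \<in> ideal_pow (poly_ring V) (SR_ideal V face) m"
    using f var_ideal_complement_facet_in_Ass[OF F] unfolding symb_pow_def by blast
  have "monomial_ideal V (set_plus_power nonface_monomials m)
      \<subseteq> (monomial_ideal V (set_plus_power (deg_at_least (V - F) 1) m) :: 'k mpoly set)"
    by (intro monomial_ideal_mono set_plus_power_mono nonface_monomials_subset F)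
  then have "ideal_pow (poly_ring V) (SR_ideal V face :: 'k mpoly set) m
      \<subseteq> ideal_pow (poly_ring V) (var_ideal V (V - F)) m"
    by (simp only: ideal_pow_SR_ideal ideal_pow_var_ideal[OF A] set_plus_power_deg_at_least[OF A(1)])
  then show "f \<in> ideal_pow (poly_ring V) (var_ideal V (V - F)) m"
    using var_ideal_power_primary[OF A s] f sf unfolding symb_pow_def by blast
qed

lemma Ass_SR_ideal_avoids_facet_monomials:
  assumes "P \<in> Ass (poly_ring V) (SR_ideal V face :: 'k::comm_ring_1 mpoly set)"
  obtains F where "facet F" "\<And>k. Poly_Mapping.single (monomial_on F k) 1 \<notin> P"
proof -
  obtain g where g: "g \<in> poly_ring V" "g \<notin> SR_ideal V face"
    and P: "P = {h \<in> poly_ring V. h * g \<in> SR_ideal V face}"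
    by (rule Ass_colon_witness[OF assms one_in_poly_ring])
  then obtain \<beta> where \<beta>: "\<beta> \<in> Poly_Mapping.keys g" "face (Poly_Mapping.keys \<beta>)"
    unfolding SR_ideal_eq_monomial_ideal monomial_ideal_def nonface_monomials_def poly_ring_def
    by (auto simp: Int_absorb2)
  then obtain F where F: "facet F" "Poly_Mapping.keys \<beta> \<subseteq> F"
    using face_subset_facet by blast
  have "Poly_Mapping.single (monomial_on F k) 1 \<notin> P" for k
  proof -
    define \<gamma> where "\<gamma> = monomial_on F k"
    have \<gamma>: "Poly_Mapping.keys \<gamma> \<subseteq> F" "Poly_Mapping.keys \<gamma> \<subseteq> V"
      unfolding \<gamma>_def using keys_monomial_on_subset[OF finite_facet[OF F(1)]] keys_monomial_on_facet[OF F(1)]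
      by blast+
    have "Poly_Mapping.keys (\<beta> + \<gamma>) \<inter> V \<subseteq> F"
      using F(2) \<gamma>(1) by (auto simp: keys_add_monomial)
    then have "\<beta> + \<gamma> \<notin> nonface_monomials"
      using face_subset facet_def F(1) unfolding nonface_monomials_def by blast
    then have "g * Poly_Mapping.single \<gamma> 1 \<notin> SR_ideal V face"
      using \<beta>(1) unfolding SR_ideal_eq_monomial_ideal mult_single_in_monomial_ideal_iff[OF g(1) \<gamma>(2)]
      by blast
    then show ?thesis
      unfolding P \<gamma>_def by (simp add: mult.commute)
  qed
  with F(1) show thesis by (rule that)
qed

lemma Inter_ideal_pow_subset_symb_pow_SR_ideal:
  "(\<Inter>F\<in>Collect facet. ideal_pow (poly_ring V) (var_ideal V (V - F)) m)
     \<subseteq> (symb_pow (poly_ring V) (SR_ideal V face) m :: 'k::idom mpoly set)"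
proof
  fix f :: "'k mpoly"
  assume f: "f \<in> (\<Inter>F\<in>Collect facet. ideal_pow (poly_ring V) (var_ideal V (V - F)) m)"
  then have f_F: "f \<in> monomial_ideal V (deg_at_least (V - F) m)" if "facet F" for F
    using that ideal_pow_var_ideal_complement_facet[OF that] by blast
  then have f_deg: "\<forall>\<mu>\<in>Poly_Mapping.keys f. \<mu> \<in> deg_at_least (V - F) m" if "facet F" for F
    using that unfolding monomial_ideal_def by blast
  obtain F0 where "facet F0" using ex_facet ..
  then have fR: "f \<in> poly_ring V"
    using f_F unfolding monomial_ideal_def by blast
  have "\<exists>s\<in>poly_ring V - P. s * f \<in> ideal_pow (poly_ring V) (SR_ideal V face) m"
    if P: "P \<in> Ass (poly_ring V) (SR_ideal V face)" for P
  proof -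
    obtain F where F: "facet F" and notin: "\<And>k. Poly_Mapping.single (monomial_on F k) 1 \<notin> P"
      using Ass_SR_ideal_avoids_facet_monomials[OF P] by blast
    define \<gamma> where "\<gamma> = monomial_on F m"
    have \<gamma>: "Poly_Mapping.keys \<gamma> \<subseteq> V"
      unfolding \<gamma>_def by (rule keys_monomial_on_facet[OF F])
    have "\<forall>\<mu>\<in>Poly_Mapping.keys f. \<mu> + \<gamma> \<in> set_plus_power nonface_monomials m"
      unfolding \<gamma>_def using f_deg[OF F] shift_by_facet_in_nonface_power[OF F] by blast
    then have "f * Poly_Mapping.single \<gamma> 1 \<in> ideal_pow (poly_ring V) (SR_ideal V face) m"
      by (simp only: mult_single_in_monomial_ideal_iff[OF fR \<gamma>] ideal_pow_SR_ideal)
    then show ?thesis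
      using notin[of m] single_in_poly_ring[OF \<gamma>] unfolding \<gamma>_def by (metis DiffI mult.commute)
  qed
  then show "f \<in> symb_pow (poly_ring V) (SR_ideal V face) m"
    unfolding symb_pow_def using fR by blast
qed

theorem symb_pow_SR_ideal_eq_Inter_facets:
  "symb_pow (poly_ring V) (SR_ideal V face) m
     = (\<Inter>F\<in>Collect facet. ideal_pow (poly_ring V) (var_ideal V (V - F)) m :: 'k::idom mpoly set)"
  by (intro equalityI INT_greatest Inter_ideal_pow_subset_symb_pow_SR_ideal)
    (auto dest: symb_pow_SR_ideal_subset_ideal_pow)

end

section \<open>Subtrees of the cycle\<close>

definition cycle_succ :: "nat \<Rightarrow> nat \<Rightarrow> nat" where
  "cycle_succ n k = (if k = n then 1 else Suc k)"

lemma qedge_iff_cycle_succ: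
  "qedge n i j \<longleftrightarrow> i \<in> {1..n} \<and> j \<in> {1..n} \<and> (j = cycle_succ n i \<or> i = cycle_succ n j)"
  unfolding qedge_def cycle_succ_def by auto

definition induced_qedge :: "nat \<Rightarrow> nat set \<Rightarrow> nat \<Rightarrow> nat \<Rightarrow> bool" where
  "induced_qedge n S a b \<longleftrightarrow> a \<in> S \<and> b \<in> S \<and> qedge n a b"

lemma induces_tree_iff:
  "induces_tree n S \<longleftrightarrow> S \<subseteq> {1..n} \<and> S \<noteq> {} \<and> (\<forall>u\<in>S. \<forall>v\<in>S. (induced_qedge n S)\<^sup>*\<^sup>* u v)
     \<and> card {{i, j} | i j. i \<in> S \<and> j \<in> S \<and> qedge n i j} = card S - 1"
  unfolding induces_tree_def induced_qedge_def[abs_def] ..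

lemma induced_qedge_rtranclp_sym: "(induced_qedge n S)\<^sup>*\<^sup>* u v \<Longrightarrow> (induced_qedge n S)\<^sup>*\<^sup>* v u"
  using symp_rtranclp[of "induced_qedge n S"] unfolding symp_def induced_qedge_def qedge_def by blast

lemma connected_if_common_target:
  assumes "\<And>u. u \<in> S \<Longrightarrow> (induced_qedge n S)\<^sup>*\<^sup>* u r"
  shows "\<forall>u\<in>S. \<forall>v\<in>S. (induced_qedge n S)\<^sup>*\<^sup>* u v"
  using assms induced_qedge_rtranclp_sym rtranclp_trans by metis

lemma interval_connected:
  assumes "{a..b} \<subseteq> S" "1 \<le> a" "b \<le> n" "u \<in> {a..b}" "v \<in> {a..b}"
  shows "(induced_qedge n S)\<^sup>*\<^sup>* u v"
proof -
  have "(induced_qedge n S)\<^sup>*\<^sup>* a w" if "w \<in> {a..b}" for w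
  proof -
    have "a \<le> w" using that by simp
    then show ?thesis
    proof (induction w rule: dec_induct)
      case base
      show ?case by simp
    next
      case (step k)
      then have "induced_qedge n S k (Suc k)"
        using assms(1-3) that unfolding induced_qedge_def qedge_def by auto
      with step.IH show ?case by simp
    qed
  qed
  then show ?thesis
    using assms(4,5) induced_qedge_rtranclp_sym rtranclp_trans by metis
qed

lemma two_intervals_reach_last:
  assumes "1 \<le> i" "i + 2 \<le> n" "S = {1..i-1} \<union> {i+2..n}" "u \<in> S"
  shows "(induced_qedge n S)\<^sup>*\<^sup>* u n"
proof (cases "u < i")
  case True
  then have "u \<in> {1..i-1}"
    using assms(3,4) by auto
  then have "(induced_qedge n S)\<^sup>*\<^sup>* u 1"
    using assms(1,2) by (intro interval_connected[of 1 "i - 1"]) (auto simp: assms(3))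
  moreover have "induced_qedge n S 1 n"
    using \<open>u \<in> {1..i-1}\<close> assms(2,3) unfolding induced_qedge_def qedge_def by auto
  ultimately show ?thesis by simp
next
  case False
  then have "u \<in> {i+2..n}"
    using assms(3,4) by auto
  then show ?thesis
    by (intro interval_connected[of "i + 2" n]) (auto simp: assms(3))
qed

lemma edge_complement_connected:
  assumes "3 \<le> n" "i \<in> {1..n}"
  defines "S \<equiv> {1..n} - {i, cycle_succ n i}"
  shows "\<forall>u\<in>S. \<forall>v\<in>S. (induced_qedge n S)\<^sup>*\<^sup>* u v"
proof -
  consider "i = n" | "i = n - 1" | "i \<le> n - 2"
    using assms(2) by fastforce
  then show ?thesis
  proof cases
    case 1
    then have "S = {2..n-1}"
      using assms by (auto simp: cycle_succ_def)
    then show ?thesis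
      using interval_connected[of 2 "n - 1" S n] by auto
  next
    case 2
    then have "S = {1..n-2}"
      using assms by (auto simp: cycle_succ_def)
    then show ?thesis
      using interval_connected[of 1 "n - 2" S n] by auto
  next
    case 3
    then have "S = {1..i-1} \<union> {i+2..n}"
      using assms by (auto simp: cycle_succ_def)
    then show ?thesis
      using 3 assms(1,2) two_intervals_reach_last[of i n S]
      by (intro connected_if_common_target[of S n n]) auto
  qed
qed

lemma induced_edges_eq_image:
  assumes "S \<subseteq> {1..n}"
  shows "{{x, y} | x y. x \<in> S \<and> y \<in> S \<and> qedge n x y}
     = (\<lambda>k. {k, cycle_succ n k}) ` {k \<in> S. cycle_succ n k \<in> S}"
proof (intro equalityI subsetI)
  fix e assume "e \<in> {{x, y} | x y. x \<in> S \<and> y \<in> S \<and> qedge n x y}"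
  then obtain x y where e: "e = {x, y}" "x \<in> S" "y \<in> S" "y = cycle_succ n x \<or> x = cycle_succ n y"
    unfolding qedge_iff_cycle_succ by blast
  then show "e \<in> (\<lambda>k. {k, cycle_succ n k}) ` {k \<in> S. cycle_succ n k \<in> S}"
    by (auto simp: insert_commute)
next
  fix e assume "e \<in> (\<lambda>k. {k, cycle_succ n k}) ` {k \<in> S. cycle_succ n k \<in> S}"
  then obtain k where "e = {k, cycle_succ n k}" "k \<in> S" "cycle_succ n k \<in> S"
    by blast
  moreover have "qedge n k (cycle_succ n k)"
    using calculation assms unfolding qedge_iff_cycle_succ by blast
  ultimately show "e \<in> {{x, y} | x y. x \<in> S \<and> y \<in> S \<and> qedge n x y}"
    by blast
qed

lemma card_induced_edges_edge_complement:
  assumes "3 \<le> n" "i \<in> {1..n}"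
  defines "S \<equiv> {1..n} - {i, cycle_succ n i}"
  shows "card {{x, y} | x y. x \<in> S \<and> y \<in> S \<and> qedge n x y} = n - 3"
proof -
  have edges: "{{x, y} | x y. x \<in> S \<and> y \<in> S \<and> qedge n x y}
      = (\<lambda>k. {k, cycle_succ n k}) ` {k \<in> S. cycle_succ n k \<in> S}"
    unfolding S_def by (rule induced_edges_eq_image) blast
  have inj: "inj_on (\<lambda>k. {k, cycle_succ n k}) {1..n}"
    using assms(1) unfolding inj_on_def doubleton_eq_iff cycle_succ_def by auto
  have "card {{x, y} | x y. x \<in> S \<and> y \<in> S \<and> qedge n x y} = card {k \<in> S. cycle_succ n k \<in> S}"
    unfolding edges by (rule card_image[OF inj_on_subset[OF inj]]) (auto simp: S_def)
  also have "{k \<in> S. cycle_succ n k \<in> S} = {1..n} - {i, cycle_succ n i, if i = 1 then n else i - 1}"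
    using assms(1,2) unfolding S_def cycle_succ_def by auto
  also have "card \<dots> = n - 3"
    using assms(1,2) by (subst card_Diff_subset) (auto simp: cycle_succ_def)
  finally show ?thesis .
qed

lemma edge_complement_in_subtrees:
  assumes "3 \<le> n" "qedge n i j"
  shows "{1..n} - {i, j} \<in> subtrees (n - 2) n"
proof -
  have succ: "{1..n} - {k, cycle_succ n k} \<in> subtrees (n - 2) n" if k: "k \<in> {1..n}" for k
  proof -
    define S where "S = {1..n} - {k, cycle_succ n k}"
    have "card {k, cycle_succ n k} = 2" "{k, cycle_succ n k} \<subseteq> {1..n}"
      using assms(1) k by (auto simp: cycle_succ_def)
    then have "card S = n - 2"
      unfolding S_def by (subst card_Diff_subset) auto
    moreover have "S \<noteq> {}"
      using \<open>card S = n - 2\<close> assms(1) by auto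
    moreover have "induces_tree n S"
      unfolding induces_tree_iff
      using edge_complement_connected[OF assms(1) k] card_induced_edges_edge_complement[OF assms(1) k]
        \<open>card S = n - 2\<close> \<open>S \<noteq> {}\<close>
      unfolding S_def by auto
    ultimately show ?thesis
      unfolding subtrees_def S_def by blast
  qed
  from assms(2) have "i \<in> {1..n}" "j \<in> {1..n}" "j = cycle_succ n i \<or> i = cycle_succ n j"
    unfolding qedge_iff_cycle_succ by auto
  then show ?thesis
    using succ by (metis insert_commute)
qed

lemma induced_walk_stays_between:
  assumes "i \<in> {1..n}" "j \<in> {1..n}" "i \<notin> S" "j \<notin> S" "i < u" "u < j"
    and "(induced_qedge n S)\<^sup>*\<^sup>* u w"
  shows "i < w \<and> w < j"
  using assms(7)
proof (induction rule: rtranclp_induct)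
  case base
  show ?case using assms(5,6) by simp
next
  case (step y z)
  then have "qedge n y z" "z \<noteq> i" "z \<noteq> j"
    using assms(3,4) unfolding induced_qedge_def by auto
  then show ?case
    using step.IH assms(1,2) unfolding qedge_def by auto
qed

lemma subtree_complement_is_edge:
  assumes "3 \<le> n" "S \<in> subtrees (n - 2) n"
  obtains i j where "qedge n i j" "S = {1..n} - {i, j}"
proof -
  have S: "S \<subseteq> {1..n}" "card S = n - 2" and conn: "\<forall>u\<in>S. \<forall>v\<in>S. (induced_qedge n S)\<^sup>*\<^sup>* u v"
    using assms(2) unfolding subtrees_def induces_tree_iff by auto
  then have "card ({1..n} - S) = 2"
    using assms(1) by (subst card_Diff_subset) (auto intro: finite_subset)
  then obtain i j where ij: "{1..n} - S = {i, j}" "i < j"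
    by (auto simp: card_2_iff) (metis insert_commute linorder_neqE_nat)
  then have i: "i \<in> {1..n}" "i \<notin> S" and j: "j \<in> {1..n}" "j \<notin> S"
    by auto
  have S_eq: "S = {1..n} - {i, j}"
    using S(1) ij(1) by blast
  have "qedge n i j"
  proof (rule ccontr)
    assume "\<not> qedge n i j"
    then have gap: "Suc i < j" "\<not> (i = 1 \<and> j = n)"
      using ij(2) i j unfolding qedge_def by auto
    \<comment> \<open>\<open>Suc i\<close> lies between \<open>i\<close> and \<open>j\<close>, the other vertex does not, yet they are connected\<close>
    have "Suc i \<in> S" "(if 1 < i then 1 else n) \<in> S"
      using gap i j ij(2) assms(1) unfolding S_eq by auto
    then have "i < (if 1 < i then 1 else n) \<and> (if 1 < i then 1 else n) < j"
      using induced_walk_stays_between[OF i(1) j(1) i(2) j(2), of "Suc i"] gap(1) conn by blast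
    then show False
      using j(1) by (auto split: if_splits)
  qed
  then show thesis using S_eq by (rule that)
qed

lemma subtrees_eq_edge_complements:
  assumes "3 \<le> n"
  shows "subtrees (n - 2) n = {{1..n} - {i, j} | i j. qedge n i j}"
  using edge_complement_in_subtrees[OF assms] subtree_complement_is_edge[OF assms] by blast

section \<open>The bipyramid over the cycle\<close>

lemma SR_ideal_Bn_eq: "SR_ideal_Bn n = SR_ideal {0..n+1} (Bn_face n)"
  unfolding SR_ideal_Bn_def SR_ideal_def Rn_eq_poly_ring ..

lemma I_face_eq_var_ideal: "I_face n a S = var_ideal {0..n+1} (insert a S)"
  unfolding I_face_def var_ideal_def Rn_eq_poly_ring by simp

lemma card_Bn_facet:
  assumes "3 \<le> n" "qedge n i j" "c \<in> {0, n + 1}"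
  shows "card {c, i, j} = 3"
  using assms unfolding qedge_def by auto

lemma simplicial_complex_Bn:
  assumes "3 \<le> n"
  shows "simplicial_complex {0..n+1} (Bn_face n)"
proof
  have "qedge n 1 2"
    using assms unfolding qedge_def by simp
  then show "Bn_face n {}"
    unfolding Bn_face_def by blast
next
  show "\<And>\<tau> \<sigma>. Bn_face n \<tau> \<Longrightarrow> \<sigma> \<subseteq> \<tau> \<Longrightarrow> Bn_face n \<sigma>"
    unfolding Bn_face_def by blast
qed (auto simp: Bn_face_def qedge_def)

lemma Bn_facet_iff:
  assumes "3 \<le> n"
  shows "simplicial_complex.facet (Bn_face n) F \<longleftrightarrow> (\<exists>c i j. qedge n i j \<and> c \<in> {0, n + 1} \<and> F = {c, i, j})"
proof
  assume "simplicial_complex.facet (Bn_face n) F"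
  then have "Bn_face n F" and max: "\<And>G. Bn_face n G \<Longrightarrow> F \<subseteq> G \<Longrightarrow> G = F"
    unfolding simplicial_complex.facet_def[OF simplicial_complex_Bn[OF assms]] by auto
  then obtain c i j where "qedge n i j" "c \<in> {0, n + 1}" "F \<subseteq> {c, i, j}"
    unfolding Bn_face_def by blast
  moreover have "Bn_face n {c, i, j}"
    using calculation unfolding Bn_face_def by blast
  ultimately show "\<exists>c i j. qedge n i j \<and> c \<in> {0, n + 1} \<and> F = {c, i, j}"
    using max by blast
next
  assume "\<exists>c i j. qedge n i j \<and> c \<in> {0, n + 1} \<and> F = {c, i, j}"
  then obtain c i j where cij: "qedge n i j" "c \<in> {0, n + 1}" and F: "F = {c, i, j}"
    by blast
  have "G = F" if "Bn_face n G" "F \<subseteq> G" for G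
  proof -
    obtain c' i' j' where "qedge n i' j'" "c' \<in> {0, n + 1}" "G \<subseteq> {c', i', j'}"
      using \<open>Bn_face n G\<close> unfolding Bn_face_def by blast
    moreover have "F = {c', i', j'}"
      using calculation \<open>F \<subseteq> G\<close> card_Bn_facet[OF assms] cij unfolding F
      by (intro card_subset_eq) auto
    ultimately show "G = F" using \<open>F \<subseteq> G\<close> by blast
  qed
  moreover have "Bn_face n F"
    unfolding F Bn_face_def using cij by blast
  ultimately show "simplicial_complex.facet (Bn_face n) F"
    unfolding simplicial_complex.facet_def[OF simplicial_complex_Bn[OF assms]] by blast
qed

lemma Inter_subtrees_eq_Inter_Bn_facets:
  assumes "3 \<le> n"
  shows "(\<Inter>S\<in>subtrees (n - 2) n. X (insert 0 S) \<inter> X (insert (n + 1) S))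
       = (\<Inter>F\<in>Collect (simplicial_complex.facet (Bn_face n)). X ({0..n+1} - F))"
proof -
  have complement: "{0..n+1} - {c, i, j} = insert (if c = 0 then n + 1 else 0) ({1..n} - {i, j})"
    if "qedge n i j" "c \<in> {0, n + 1}" for c i j
    using that unfolding qedge_def by auto
  show ?thesis
  proof (rule set_eqI)
    fix f
    have "f \<in> (\<Inter>F\<in>Collect (simplicial_complex.facet (Bn_face n)). X ({0..n+1} - F))
        \<longleftrightarrow> (\<forall>i j. qedge n i j \<longrightarrow> (\<forall>c\<in>{0, n + 1}. f \<in> X ({0..n+1} - {c, i, j})))"
      unfolding Bn_facet_iff[OF assms] by blast
    also have "\<dots> \<longleftrightarrow> (\<forall>i j. qedge n i j
        \<longrightarrow> f \<in> X (insert 0 ({1..n} - {i, j})) \<inter> X (insert (n + 1) ({1..n} - {i, j})))"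
      using complement by (simp add: conj_commute)
    also have "\<dots> \<longleftrightarrow> f \<in> (\<Inter>S\<in>subtrees (n - 2) n. X (insert 0 S) \<inter> X (insert (n + 1) S))"
      unfolding subtrees_eq_edge_complements[OF assms] by blast
    finally show "f \<in> (\<Inter>S\<in>subtrees (n - 2) n. X (insert 0 S) \<inter> X (insert (n + 1) S))
        \<longleftrightarrow> f \<in> (\<Inter>F\<in>Collect (simplicial_complex.facet (Bn_face n)). X ({0..n+1} - F))"
      by blast
  qed
qed

theorem proposition3p2:
  fixes n :: nat
  assumes "n \<ge> 3"
  shows "(SR_ideal_Bn n :: 'k::field mpoly set)
           = (\<Inter>S \<in> subtrees (n - 2) n. I_face n 0 S \<inter> I_face n (n + 1) S)
     \<and> (\<forall>m::nat. m \<ge> 1 \<longrightarrow>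
           symb_pow (Rn n) (SR_ideal_Bn n :: 'k::field mpoly set) m
           = (\<Inter>S \<in> subtrees (n - 2) n.
                ideal_pow (Rn n) (I_face n 0 S) m \<inter> ideal_pow (Rn n) (I_face n (n + 1) S) m))"
proof -
  interpret Bn: simplicial_complex "{0..n+1}" "Bn_face n"
    using simplicial_complex_Bn assms .
  show ?thesis
  proof (intro conjI allI impI)
    show "(SR_ideal_Bn n :: 'k mpoly set) = (\<Inter>S \<in> subtrees (n - 2) n. I_face n 0 S \<inter> I_face n (n + 1) S)"
      unfolding I_face_eq_var_ideal SR_ideal_Bn_eq Inter_subtrees_eq_Inter_Bn_facets[OF assms, of "var_ideal {0..n+1}"]
      by (rule Bn.SR_ideal_eq_Inter_facets)
    fix m :: nat
    show "symb_pow (Rn n) (SR_ideal_Bn n :: 'k mpoly set) m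
        = (\<Inter>S \<in> subtrees (n - 2) n. ideal_pow (Rn n) (I_face n 0 S) m \<inter> ideal_pow (Rn n) (I_face n (n + 1) S) m)"
      unfolding I_face_eq_var_ideal SR_ideal_Bn_eq Rn_eq_poly_ring
        Inter_subtrees_eq_Inter_Bn_facets[OF assms, of "\<lambda>A. ideal_pow (poly_ring {0..n+1}) (var_ideal {0..n+1} A) m"]
      by (rule Bn.symb_pow_SR_ideal_eq_Inter_facets)
  qed
qed

end
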